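(* Fix an integer $N\ge 3$ and parameters $p_0,p_1,p_2,p_3\in(0,1)$, and set $q_m:=1-p_m$ for $m=0,1,2,3$. Let $\mu(p_0,p_1,p_2,p_3)$ denote the mean profit per turn of the cooperative Parrondo game $B$ with these parameters (defined in the context). Then $$\mu(p_0,p_1,p_2,p_3)=-\mu(q_3,q_2,q_1,q_0).$$ In particular, if $p_0+p_3=1$ and $p_1+p_2=1$, then $\mu(p_0,p_1,p_2,p_3)=0$.
   Context: Model (cooperative Parrondo game $B$): $N\ge 3$ players labeled $1,\ldots,N$ sit in a circle (indices mod $N$, so player $0$ is player $N$ and player $N+1$ is player $1$). The state space is $\Sigma=\{0,1\}^N$, where $x_i=1$ means player $i$ won his most recent game and $x_i=0$ means he lost. For $\bm x\in\Sigma$ let $m_i(\bm x):=2x_{i-1}+x_{i+1}\in\{0,1,2,3\}$ and let $\bm x^i$ be $\bm x$ with the $i$th coordinate replaced by $1-x_i$. At each turn a player $i$ is chosen uniformly at random and tosses a coin with heads probability $p_{m_i(\bm x)}$; heads means he wins one unit (and $x_i$ becomes $1$), tails means he loses one unit (and $x_i$ becomes $0$). Thus the status process is the Markov chain on $\Sigma$ with $P(\bm x,\bm x^i)=N^{-1}p_{m_i(\bm x)}$ if $x_i=0$, $P(\bm x,\bm x^i)=N^{-1}q_{m_i(\bm x)}$ if $x_i=1$, and $P(\bm x,\bm x)=N^{-1}\big(\sum_{i:x_i=0}q_{m_i(\bm x)}+\sum_{i:x_i=1}p_{m_i(\bm x)}\big)$. When all $p_m\in(0,1)$ this chain is irreducible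 and aperiodic with unique stationary distribution $\bm\pi$. The mean profit per turn is $$\mu(p_0,p_1,p_2,p_3):=\sum_{\bm x\in\Sigma}\pi(\bm x)\sum_{i=1}^N N^{-1}\big[p_{m_i(\bm x)}-q_{m_i(\bm x)}\big],$$ which equals the almost-sure limit of $S_n/n$, where $S_n$ is the cumulative profit of the ensemble of $N$ players after $n$ turns (for any initial distribution). *)

theory Defs
  imports Complex_Main
begin

(* States: bool lists of length N; position i (0-based, i < N) encodes player i+1;
   True = won most recent game (x_i = 1). Neighbours taken mod N. *)

definition states :: "nat \<Rightarrow> bool list set" where
  "states N = {xs. length xs = N}"

definition bit :: "bool \<Rightarrow> nat" where
  "bit b = (if b then 1 else 0)"

definition mi :: "nat \<Rightarrow> bool list \<Rightarrow> nat \<Rightarrow> nat" where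
  "mi N x i = 2 * bit (x ! ((i + N - 1) mod N)) + bit (x ! ((i + 1) mod N))"

definition pm :: "real \<Rightarrow> real \<Rightarrow> real \<Rightarrow> real \<Rightarrow> nat \<Rightarrow> real" where
  "pm p0 p1 p2 p3 m = [p0, p1, p2, p3] ! m"

definition trans :: "nat \<Rightarrow> real \<Rightarrow> real \<Rightarrow> real \<Rightarrow> real \<Rightarrow> bool list \<Rightarrow> bool list \<Rightarrow> real" where
  "trans N p0 p1 p2 p3 x y =
     (\<Sum>i<N. (1 / real N) *
        ((if y = x[i := True] then pm p0 p1 p2 p3 (mi N x i) else 0)
       + (if y = x[i := False] then 1 - pm p0 p1 p2 p3 (mi N x i) else 0)))"

definition is_stationary ::
  "nat \<Rightarrow> real \<Rightarrow> real \<Rightarrow> real \<Rightarrow> real \<Rightarrow> (bool list \<Rightarrow> real) \<Rightarrow> bool" where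
  "is_stationary N p0 p1 p2 p3 \<pi> \<longleftrightarrow>
     (\<forall>x. x \<notin> states N \<longrightarrow> \<pi> x = 0) \<and>
     (\<forall>x\<in>states N. \<pi> x \<ge> 0) \<and>
     (\<Sum>x\<in>states N. \<pi> x) = 1 \<and>
     (\<forall>y\<in>states N. (\<Sum>x\<in>states N. \<pi> x * trans N p0 p1 p2 p3 x y) = \<pi> y)"

definition stat_dist :: "nat \<Rightarrow> real \<Rightarrow> real \<Rightarrow> real \<Rightarrow> real \<Rightarrow> bool list \<Rightarrow> real" where
  "stat_dist N p0 p1 p2 p3 = (THE \<pi>. is_stationary N p0 p1 p2 p3 \<pi>)"

definition mu :: "nat \<Rightarrow> real \<Rightarrow> real \<Rightarrow> real \<Rightarrow> real \<Rightarrow> real" where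
  "mu N p0 p1 p2 p3 =
     (\<Sum>x\<in>states N. stat_dist N p0 p1 p2 p3 x *
        (\<Sum>i<N. (1 / real N) *
           (pm p0 p1 p2 p3 (mi N x i) - (1 - pm p0 p1 p2 p3 (mi N x i)))))"

end

theory Submission
  imports Defs "Jordan_Normal_Form.Determinant"
begin

text \<open>Complementing every coordinate turns \<open>m\<^sub>i\<close> into \<open>3 - m\<^sub>i\<close> and wins into losses, so it
  conjugates game B with parameters \<open>(p\<^sub>0, p\<^sub>1, p\<^sub>2, p\<^sub>3)\<close> to game B with parameters
  \<open>(q\<^sub>3, q\<^sub>2, q\<^sub>1, q\<^sub>0)\<close>. Hence the stationary distribution of the latter is the former one
  composed with complementation, while the mean gain in each state changes sign.
  Identifying the stationary distribution requires that it exists and is unique: a stochastic matrix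
  has a nonzero left null vector of \<open>P - I\<close>, whose positive part is again invariant; and for an
  irreducible chain a nonnegative invariant vector vanishing at one state vanishes everywhere.\<close>

lemma zero_row_sums_imp_left_kernel_mat:
  fixes B :: "real mat"
  assumes B: "B \<in> carrier_mat n n" and "n > 0" and rows: "\<And>i. i < n \<Longrightarrow> (\<Sum>j<n. B $$ (i, j)) = 0"
  shows "\<exists>v\<in>carrier_vec n. v \<noteq> 0\<^sub>v n \<and> transpose_mat B *\<^sub>v v = 0\<^sub>v n"
proof -
  define one :: "real vec" where "one = vec n (\<lambda>_. 1)"
  have "B *\<^sub>v one = 0\<^sub>v n"
    using B rows by (intro eq_vecI) (auto simp: one_def scalar_prod_def atLeast0LessThan)
  moreover have "one \<in> carrier_vec n" "one \<noteq> 0\<^sub>v n"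
    using \<open>n > 0\<close> by (auto simp: one_def dest!: arg_cong[where f = "\<lambda>v. v $ 0"])
  ultimately have "det B = 0" using det_0_iff_vec_prod_zero[OF B] by blast
  hence "det (transpose_mat B) = 0" using det_transpose[OF B] by simp
  thus ?thesis using det_0_iff_vec_prod_zero[of "transpose_mat B"] B by auto
qed

lemma zero_row_sums_imp_left_kernel:
  fixes A :: "'a \<Rightarrow> 'a \<Rightarrow> real"
  assumes S: "finite S" "S \<noteq> {}" and rows: "\<And>x. x \<in> S \<Longrightarrow> (\<Sum>y\<in>S. A x y) = 0"
  shows "\<exists>w. (\<forall>y\<in>S. (\<Sum>x\<in>S. w x * A x y) = 0) \<and> (\<exists>x\<in>S. w x \<noteq> 0)"
proof -
  obtain h where h: "bij_betw h {..<card S} S"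
    using ex_bij_betw_nat_finite[OF S(1)] by (auto simp: atLeast0LessThan)
  have hS: "i < card S \<Longrightarrow> h i \<in> S" for i using h by (auto simp: bij_betw_def)
  define B :: "real mat" where "B = mat (card S) (card S) (\<lambda>(i, j). A (h i) (h j))"
  have "(\<Sum>j<card S. B $$ (i, j)) = 0" if "i < card S" for i
    using that rows[OF hS[OF that]] sum.reindex_bij_betw[OF h, of "A (h i)"] by (simp add: B_def)
  then obtain v where v: "v \<in> carrier_vec (card S)" "v \<noteq> 0\<^sub>v (card S)"
      "transpose_mat B *\<^sub>v v = 0\<^sub>v (card S)"
    using zero_row_sums_imp_left_kernel_mat[of B "card S"] S by (auto simp: B_def card_gt_0_iff)
  define w where "w x = v $ the_inv_into {..<card S} h x" for x
  have w_h: "i < card S \<Longrightarrow> w (h i) = v $ i" for i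
    using h by (simp add: w_def bij_betw_def the_inv_into_f_f)
  have "(\<Sum>x\<in>S. w x * A x y) = 0" if "y \<in> S" for y
  proof -
    obtain j where j: "j < card S" "y = h j" using h \<open>y \<in> S\<close> by (auto simp: bij_betw_def)
    have "(\<Sum>x\<in>S. w x * A x y) = (\<Sum>i<card S. w (h i) * A (h i) (h j))"
      using j sum.reindex_bij_betw[OF h, of "\<lambda>x. w x * A x y"] by simp
    also have "\<dots> = (transpose_mat B *\<^sub>v v) $ j"
      using j v(1) by (simp add: w_h B_def scalar_prod_def atLeast0LessThan mult.commute)
    finally show ?thesis using v(3) j by simp
  qed
  moreover obtain i where "i < card S" "v $ i \<noteq> 0"
    using v(1,2) by (metis carrier_vecD eq_vecI index_zero_vec)
  ultimately show ?thesis using hS w_h by metis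
qed

definition invariant_vector :: "'a set \<Rightarrow> ('a \<Rightarrow> 'a \<Rightarrow> real) \<Rightarrow> ('a \<Rightarrow> real) \<Rightarrow> bool" where
  "invariant_vector S P w \<longleftrightarrow> (\<forall>y\<in>S. (\<Sum>x\<in>S. w x * P x y) = w y)"

definition stationary_distribution ::
  "'a set \<Rightarrow> ('a \<Rightarrow> 'a \<Rightarrow> real) \<Rightarrow> ('a \<Rightarrow> real) \<Rightarrow> bool" where
  "stationary_distribution S P \<pi> \<longleftrightarrow>
     (\<forall>x. x \<notin> S \<longrightarrow> \<pi> x = 0) \<and> (\<forall>x\<in>S. 0 \<le> \<pi> x) \<and> (\<Sum>x\<in>S. \<pi> x) = 1 \<and>
     invariant_vector S P \<pi>"

lemma invariant_vector_diff:
  "invariant_vector S P v \<Longrightarrow> invariant_vector S P w \<Longrightarrow> invariant_vector S P (\<lambda>x. v x - w x)"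
  unfolding invariant_vector_def by (simp add: left_diff_distrib sum_subtractf)

lemma invariant_vector_uminus:
  "invariant_vector S P w \<Longrightarrow> invariant_vector S P (\<lambda>x. - w x)"
  unfolding invariant_vector_def by (simp add: sum_negf)

lemma stationary_distribution_relabel:
  assumes f: "\<And>x. f (f x) = x" "\<And>x. f x \<in> S \<longleftrightarrow> x \<in> S"
    and Q: "\<And>x y. x \<in> S \<Longrightarrow> y \<in> S \<Longrightarrow> Q (f x) (f y) = P x y"
    and \<pi>: "stationary_distribution S P \<pi>"
  shows "stationary_distribution S Q (\<lambda>x. \<pi> (f x))"
proof -
  have "bij_betw f S S" by (rule bij_betw_byWitness[where f' = f]) (use f in auto)
  hence reindex: "(\<Sum>x\<in>S. g (f x)) = (\<Sum>x\<in>S. g x)" for g :: "_ \<Rightarrow> real"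
    by (rule sum.reindex_bij_betw)
  have "(\<Sum>x\<in>S. \<pi> (f x) * Q x y) = \<pi> (f y)" if "y \<in> S" for y
  proof -
    have "(\<Sum>x\<in>S. \<pi> (f x) * Q x y) = (\<Sum>x\<in>S. \<pi> x * Q (f x) (f (f y)))"
      using reindex[of "\<lambda>x. \<pi> (f x) * Q x y"] by (simp add: f(1))
    also have "\<dots> = (\<Sum>x\<in>S. \<pi> x * P x (f y))" using that by (simp add: Q f(2))
    also have "\<dots> = \<pi> (f y)"
      using \<pi> that f(2) unfolding stationary_distribution_def invariant_vector_def by blast
    finally show ?thesis .
  qed
  with \<pi> show ?thesis
    unfolding stationary_distribution_def invariant_vector_def by (simp add: reindex f(2))
qed

locale stochastic_matrix =
  fixes S :: "'a set" and P :: "'a \<Rightarrow> 'a \<Rightarrow> real"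
  assumes finite_S: "finite S" and S_nonempty: "S \<noteq> {}"
    and nonneg: "\<And>x y. x \<in> S \<Longrightarrow> y \<in> S \<Longrightarrow> 0 \<le> P x y"
    and row_sum: "\<And>x. x \<in> S \<Longrightarrow> (\<Sum>y\<in>S. P x y) = 1"
begin

text \<open>Total mass is preserved while each coordinate can only grow, so nothing grows.\<close>
lemma invariant_vector_max_0:
  assumes "invariant_vector S P w"
  shows "invariant_vector S P (\<lambda>x. max (w x) 0)"
proof -
  define u where "u x = max (w x) 0" for x
  define a where "a y = (\<Sum>x\<in>S. u x * P x y)" for y
  have a_ge: "u y \<le> a y" if "y \<in> S" for y
  proof -
    have "w y = (\<Sum>x\<in>S. w x * P x y)" using assms that unfolding invariant_vector_def by simp
    also have "\<dots> \<le> a y" unfolding a_def u_def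
      using that by (intro sum_mono mult_right_mono) (auto simp: nonneg)
    finally show ?thesis
      using that nonneg by (auto simp: u_def a_def intro!: sum_nonneg)
  qed
  have "(\<Sum>y\<in>S. a y) = (\<Sum>x\<in>S. u x * (\<Sum>y\<in>S. P x y))"
    unfolding a_def by (subst sum.swap) (simp add: sum_distrib_left)
  also have "\<dots> = (\<Sum>x\<in>S. u x)" by (simp add: row_sum)
  finally have "(\<Sum>y\<in>S. a y - u y) = 0" by (simp add: sum_subtractf)
  hence "\<forall>y\<in>S. a y - u y = 0"
    using a_ge by (subst (asm) sum_nonneg_eq_0_iff) (auto simp: finite_S)
  thus ?thesis unfolding invariant_vector_def a_def u_def by simp
qed

lemma ex_nonzero_invariant_vector: "\<exists>w. invariant_vector S P w \<and> (\<exists>x\<in>S. w x \<noteq> 0)"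
proof -
  have "\<And>x. x \<in> S \<Longrightarrow> (\<Sum>y\<in>S. P x y - of_bool (x = y)) = 0"
    by (simp add: sum_subtractf row_sum finite_S)
  from zero_row_sums_imp_left_kernel[of S "\<lambda>x y. P x y - of_bool (x = y)", OF finite_S S_nonempty this]
  obtain w where "\<forall>y\<in>S. (\<Sum>x\<in>S. w x * (P x y - of_bool (x = y))) = 0" "\<exists>x\<in>S. w x \<noteq> 0"
    by blast
  moreover have "(\<Sum>x\<in>S. w x * (P x y - of_bool (x = y))) = (\<Sum>x\<in>S. w x * P x y) - w y"
    if "y \<in> S" for y
    using that by (simp add: right_diff_distrib sum_subtractf finite_S)
  ultimately show ?thesis unfolding invariant_vector_def by auto
qed

lemma ex_stationary_distribution: "\<exists>\<pi>. stationary_distribution S P \<pi>"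
proof -
  obtain w x0 where w: "invariant_vector S P w" "x0 \<in> S" "w x0 \<noteq> 0"
    using ex_nonzero_invariant_vector by blast
  obtain u where u: "invariant_vector S P u" "\<forall>x. 0 \<le> u x" "0 < u x0"
  proof (cases "w x0 > 0")
    case True
    with w show ?thesis by (intro that[of "\<lambda>x. max (w x) 0"] invariant_vector_max_0) auto
  next
    case False
    with w show ?thesis
      by (intro that[of "\<lambda>x. max (- w x) 0"] invariant_vector_max_0 invariant_vector_uminus) auto
  qed
  define s where "s = (\<Sum>x\<in>S. u x)"
  have "u x0 \<le> s" unfolding s_def using u(2) w(2) by (intro member_le_sum) (auto simp: finite_S)
  hence s: "s > 0" using u(3) by simp
  define \<pi> where "\<pi> x = (if x \<in> S then u x / s else 0)" for x
  have "(\<Sum>x\<in>S. \<pi> x) = s / s" by (simp add: \<pi>_def s_def sum_divide_distrib[symmetric])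
  moreover have "(\<Sum>x\<in>S. \<pi> x * P x y) = (\<Sum>x\<in>S. u x * P x y) / s" for y
    by (simp add: \<pi>_def sum_divide_distrib)
  ultimately have "stationary_distribution S P \<pi>"
    using u(1,2) s unfolding stationary_distribution_def invariant_vector_def by (simp add: \<pi>_def)
  thus ?thesis by blast
qed

end

locale irreducible_stochastic_matrix = stochastic_matrix +
  assumes irreducible:
    "\<And>x y. x \<in> S \<Longrightarrow> y \<in> S \<Longrightarrow> (x, y) \<in> {(x, y). x \<in> S \<and> y \<in> S \<and> 0 < P x y}\<^sup>*"
begin

lemma invariant_vector_nonneg_vanishes:
  assumes w: "invariant_vector S P w" "\<forall>x\<in>S. 0 \<le> w x" and y: "y \<in> S" "w y = 0" and x: "x \<in> S"
  shows "w x = 0"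
  using irreducible[OF x y(1)]
proof (induction rule: converse_rtrancl_induct)
  case (step a b)
  hence ab: "a \<in> S" "b \<in> S" "0 < P a b" by auto
  have "(\<Sum>x\<in>S. w x * P x b) = 0" using w(1) ab step.IH unfolding invariant_vector_def by simp
  hence "\<forall>x\<in>S. w x * P x b = 0"
    using w(2) ab nonneg by (subst (asm) sum_nonneg_eq_0_iff) (auto simp: finite_S)
  thus "w a = 0" using ab by force
qed (use y in simp)

lemma stationary_distribution_unique:
  assumes "stationary_distribution S P \<pi>1" "stationary_distribution S P \<pi>2"
  shows "\<pi>1 = \<pi>2"
proof -
  define v where "v x = \<pi>1 x - \<pi>2 x" for x
  have inv: "invariant_vector S P v"
    using assms unfolding stationary_distribution_def v_def by (intro invariant_vector_diff) auto
  have sum_v: "(\<Sum>x\<in>S. v x) = 0"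
    using assms unfolding stationary_distribution_def v_def by (simp add: sum_subtractf)
  obtain y where y: "y \<in> S" "v y \<le> 0"
  proof (rule ccontr)
    assume "\<not> thesis"
    hence "0 < (\<Sum>x\<in>S. v x)" using that by (intro sum_pos finite_S S_nonempty) force
    with sum_v show False by simp
  qed
  have "max (v x) 0 = 0" if "x \<in> S" for x
    using invariant_vector_nonneg_vanishes[OF invariant_vector_max_0[OF inv] _ y(1) _ that] y(2)
    by simp
  hence "\<forall>x\<in>S. 0 \<le> - v x" by (metis max_def neg_0_le_iff_le order_refl)
  moreover have "(\<Sum>x\<in>S. - v x) = 0" using sum_v by (simp add: sum_negf)
  ultimately have "\<forall>x\<in>S. v x = 0" by (subst (asm) sum_nonneg_eq_0_iff) (auto simp: finite_S)
  thus ?thesis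
    using assms unfolding stationary_distribution_def v_def by (metis eq_iff_diff_eq_0 ext)
qed

lemma ex1_stationary_distribution: "\<exists>!\<pi>. stationary_distribution S P \<pi>"
  using ex_stationary_distribution stationary_distribution_unique by blast

end

lemma rtrancl_list_updates:
  assumes step: "\<And>x i b. length x = n \<Longrightarrow> i < n \<Longrightarrow> (x, x[i := b]) \<in> R"
    and "length x = n" "length y = n"
  shows "(x, y) \<in> R\<^sup>*"
proof -
  define z where "z k = take k y @ drop k x" for k
  have "(x, z k) \<in> R\<^sup>*" if "k \<le> n" for k
    using that
  proof (induction k)
    case 0
    thus ?case by (simp add: z_def)
  next
    case (Suc k)
    have "drop k x = x ! k # drop (Suc k) x"
      using Suc.prems assms(2) by (simp add: Cons_nth_drop_Suc)
    hence "z (Suc k) = (z k)[k := y ! k]"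
      using Suc.prems assms(2,3) by (simp add: z_def list_update_append take_Suc_conv_app_nth)
    moreover have "length (z k) = n" using Suc.prems assms(2,3) by (simp add: z_def)
    ultimately have "(z k, z (Suc k)) \<in> R" using step Suc.prems by simp
    with Suc show ?case by simp
  qed
  from this[of n] show ?thesis using assms(2,3) by (simp add: z_def)
qed

lemma finite_states: "finite (states N)"
  using finite_lists_length_eq[of "UNIV :: bool set" N] by (simp add: states_def)

lemma mi_le_3: "mi N x i \<le> 3"
  unfolding mi_def bit_def by auto

lemma pm_bounds:
  assumes "0 < p0" "p0 < 1" "0 < p1" "p1 < 1" "0 < p2" "p2 < 1" "0 < p3" "p3 < 1" and "m \<le> 3"
  shows "0 < pm p0 p1 p2 p3 m" "pm p0 p1 p2 p3 m < 1"
  using assms by (auto simp: pm_def numeral_3_eq_3 le_Suc_eq)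

lemma is_stationary_iff:
  "is_stationary N p0 p1 p2 p3 = stationary_distribution (states N) (trans N p0 p1 p2 p3)"
  unfolding is_stationary_def stationary_distribution_def invariant_vector_def by simp

context
  fixes N :: nat and p0 p1 p2 p3 :: real
  assumes N: "N > 0"
    and p: "0 < p0" "p0 < 1" "0 < p1" "p1 < 1" "0 < p2" "p2 < 1" "0 < p3" "p3 < 1"
begin

private lemma p_mi: "0 < pm p0 p1 p2 p3 (mi N x i)" "pm p0 p1 p2 p3 (mi N x i) < 1"
  using pm_bounds[OF p mi_le_3] by auto

lemma trans_nonneg: "0 \<le> trans N p0 p1 p2 p3 x y"
  unfolding trans_def using p_mi N by (intro sum_nonneg) (auto simp: less_imp_le)

lemma trans_row_sum:
  assumes "x \<in> states N"
  shows "(\<Sum>y\<in>states N. trans N p0 p1 p2 p3 x y) = 1"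
proof -
  have upd: "x[i := b] \<in> states N" for i b using assms by (simp add: states_def)
  have "(\<Sum>y\<in>states N. trans N p0 p1 p2 p3 x y) = (\<Sum>i<N. \<Sum>y\<in>states N. (1 / real N) *
          ((if y = x[i := True] then pm p0 p1 p2 p3 (mi N x i) else 0)
         + (if y = x[i := False] then 1 - pm p0 p1 p2 p3 (mi N x i) else 0)))"
    unfolding trans_def by (rule sum.swap)
  also have "\<dots> = (\<Sum>i<N. 1 / real N)"
    by (intro sum.cong refl) (simp add: sum_divide_distrib[symmetric] sum.distrib finite_states upd)
  finally show ?thesis using N by simp
qed

lemma trans_list_update_pos:
  assumes "x \<in> states N" "i < N"
  shows "0 < trans N p0 p1 p2 p3 x (x[i := b])"
proof -
  let ?f = "\<lambda>j. (1 / real N) *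
        ((if x[i := b] = x[j := True] then pm p0 p1 p2 p3 (mi N x j) else 0)
       + (if x[i := b] = x[j := False] then 1 - pm p0 p1 p2 p3 (mi N x j) else 0))"
  have "x[i := True] \<noteq> x[i := False]"
    using assms by (auto simp: states_def dest: arg_cong[where f = "\<lambda>l. l ! i"])
  hence "0 < ?f i" using p_mi[of x i] N by (cases b) auto
  also have "?f i \<le> sum ?f {..<N}"
    using assms(2) p_mi N by (intro member_le_sum) (auto simp: less_imp_le)
  finally show ?thesis unfolding trans_def .
qed

lemma irreducible_stochastic_matrix_trans:
  "irreducible_stochastic_matrix (states N) (trans N p0 p1 p2 p3)"
proof
  show "states N \<noteq> {}" by (auto simp: states_def intro!: exI[of _ "replicate N True"])
  fix x y assume "x \<in> states N" "y \<in> states N"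
  moreover have
    "(u, u[i := b]) \<in> {(x, y). x \<in> states N \<and> y \<in> states N \<and> 0 < trans N p0 p1 p2 p3 x y}"
    if "length u = N" "i < N" for u i b
    using that trans_list_update_pos[of u i b] by (simp add: states_def)
  ultimately show "(x, y) \<in> {(x, y). x \<in> states N \<and> y \<in> states N \<and> 0 < trans N p0 p1 p2 p3 x y}\<^sup>*"
    by (intro rtrancl_list_updates[where n = N]) (simp_all add: states_def)
qed (auto simp: finite_states trans_nonneg trans_row_sum)

lemma ex1_is_stationary: "\<exists>!\<pi>. is_stationary N p0 p1 p2 p3 \<pi>"
  unfolding is_stationary_iff
  by (rule irreducible_stochastic_matrix.ex1_stationary_distribution[OF irreducible_stochastic_matrix_trans])

lemma is_stationary_stat_dist: "is_stationary N p0 p1 p2 p3 (stat_dist N p0 p1 p2 p3)"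
  unfolding stat_dist_def by (rule theI'[OF ex1_is_stationary])

lemma stat_dist_eqI: "is_stationary N p0 p1 p2 p3 \<pi> \<Longrightarrow> stat_dist N p0 p1 p2 p3 = \<pi>"
  unfolding stat_dist_def by (rule the1_equality[OF ex1_is_stationary])

end

lemma map_Not_involution: "map Not (map Not x) = x"
  by (simp add: comp_def)

lemma bij_betw_map_Not_states: "bij_betw (map Not) (states N) (states N)"
  by (rule bij_betw_byWitness[where f' = "map Not"]) (auto simp: states_def comp_def)

lemma mi_map_Not:
  assumes "length x = N" "N > 0"
  shows "mi N (map Not x) i = 3 - mi N x i"
  using assms by (simp add: mi_def bit_def)

lemma pm_dual: "m \<le> 3 \<Longrightarrow> pm (1 - p3) (1 - p2) (1 - p1) (1 - p0) m = 1 - pm p0 p1 p2 p3 (3 - m)"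
  by (auto simp: pm_def numeral_3_eq_3 le_Suc_eq)

lemma pm_dual_mi_map_Not:
  assumes "length x = N" "N > 0"
  shows "pm (1 - p3) (1 - p2) (1 - p1) (1 - p0) (mi N (map Not x) i) = 1 - pm p0 p1 p2 p3 (mi N x i)"
  using mi_le_3[of N x i] by (simp add: mi_map_Not[OF assms] pm_dual)

lemma trans_dual:
  assumes "length x = N" "N > 0"
  shows "trans N (1 - p3) (1 - p2) (1 - p1) (1 - p0) (map Not x) (map Not y) = trans N p0 p1 p2 p3 x y"
proof -
  have flip: "map Not y = (map Not x)[i := b] \<longleftrightarrow> y = x[i := \<not> b]" for i b
    by (metis map_Not_involution map_update)
  show ?thesis
    unfolding trans_def flip[of _ True] flip[of _ False] pm_dual_mi_map_Not[OF assms]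
    by (intro sum.cong refl) auto
qed

lemma is_stationary_dual:
  assumes "N > 0" "is_stationary N p0 p1 p2 p3 \<pi>"
  shows "is_stationary N (1 - p3) (1 - p2) (1 - p1) (1 - p0) (\<lambda>x. \<pi> (map Not x))"
  using assms(2) unfolding is_stationary_iff
  by (rule stationary_distribution_relabel[rotated 3]) (auto simp: states_def trans_dual assms(1) comp_def)

definition mean_gain :: "nat \<Rightarrow> real \<Rightarrow> real \<Rightarrow> real \<Rightarrow> real \<Rightarrow> bool list \<Rightarrow> real" where
  "mean_gain N p0 p1 p2 p3 x =
     (\<Sum>i<N. (1 / real N) * (pm p0 p1 p2 p3 (mi N x i) - (1 - pm p0 p1 p2 p3 (mi N x i))))"

lemma mu_eq_sum_mean_gain:
  "mu N p0 p1 p2 p3 = (\<Sum>x\<in>states N. stat_dist N p0 p1 p2 p3 x * mean_gain N p0 p1 p2 p3 x)"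
  unfolding mu_def mean_gain_def ..

lemma mean_gain_dual:
  assumes "length x = N" "N > 0"
  shows "mean_gain N (1 - p3) (1 - p2) (1 - p1) (1 - p0) (map Not x) = - mean_gain N p0 p1 p2 p3 x"
  unfolding mean_gain_def by (simp add: pm_dual_mi_map_Not[OF assms] sum_negf[symmetric] algebra_simps)

lemma mu_dual:
  fixes N :: nat and p0 p1 p2 p3 :: real
  assumes N: "N > 0"
    and p: "0 < p0" "p0 < 1" "0 < p1" "p1 < 1" "0 < p2" "p2 < 1" "0 < p3" "p3 < 1"
  shows "mu N (1 - p3) (1 - p2) (1 - p1) (1 - p0) = - mu N p0 p1 p2 p3"
proof -
  let ?\<pi> = "stat_dist N p0 p1 p2 p3"
  have dual_stat_dist: "stat_dist N (1 - p3) (1 - p2) (1 - p1) (1 - p0) = (\<lambda>x. ?\<pi> (map Not x))"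
    using p by (intro stat_dist_eqI is_stationary_dual is_stationary_stat_dist N) auto
  have "mu N (1 - p3) (1 - p2) (1 - p1) (1 - p0)
      = (\<Sum>x\<in>states N. ?\<pi> (map Not x) * mean_gain N (1 - p3) (1 - p2) (1 - p1) (1 - p0) x)"
    by (simp add: mu_eq_sum_mean_gain dual_stat_dist)
  also have "\<dots> = (\<Sum>x\<in>states N. ?\<pi> x * mean_gain N (1 - p3) (1 - p2) (1 - p1) (1 - p0) (map Not x))"
    using sum.reindex_bij_betw[OF bij_betw_map_Not_states[of N],
        of "\<lambda>x. ?\<pi> (map Not x) * mean_gain N (1 - p3) (1 - p2) (1 - p1) (1 - p0) x"]
    by (simp add: comp_def)
  also have "\<dots> = (\<Sum>x\<in>states N. - (?\<pi> x * mean_gain N p0 p1 p2 p3 x))"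
    by (intro sum.cong refl) (simp add: mean_gain_dual N states_def)
  also have "\<dots> = - mu N p0 p1 p2 p3" by (simp add: mu_eq_sum_mean_gain sum_negf)
  finally show ?thesis .
qed

theorem corollary1:
  fixes N :: nat and p0 p1 p2 p3 :: real
  assumes "N \<ge> 3"
    and "0 < p0" "p0 < 1" and "0 < p1" "p1 < 1"
    and "0 < p2" "p2 < 1" and "0 < p3" "p3 < 1"
  shows "mu N p0 p1 p2 p3 = - mu N (1 - p3) (1 - p2) (1 - p1) (1 - p0)
         \<and> (p0 + p3 = 1 \<and> p1 + p2 = 1 \<longrightarrow> mu N p0 p1 p2 p3 = 0)"
proof
  have dual: "mu N (1 - p3) (1 - p2) (1 - p1) (1 - p0) = - mu N p0 p1 p2 p3"
    using assms by (intro mu_dual) auto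
  thus "mu N p0 p1 p2 p3 = - mu N (1 - p3) (1 - p2) (1 - p1) (1 - p0)" by simp
  show "p0 + p3 = 1 \<and> p1 + p2 = 1 \<longrightarrow> mu N p0 p1 p2 p3 = 0"
  proof
    assume "p0 + p3 = 1 \<and> p1 + p2 = 1"
    hence "1 - p3 = p0" "1 - p2 = p1" "1 - p1 = p2" "1 - p0 = p3" by auto
    with dual show "mu N p0 p1 p2 p3 = 0" by simp
  qed
qed

end
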